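(* For every positive integer $n$, $$\sum_{\mathbf a\in\mathsf{PF}_n} t^{z(\mathbf a)}=\sum_{\mathbf a\in\mathsf{PF}_n} t^{\operatorname{run}(\mathbf a)}.$$
   Context: Let $[n]=\{1,\dots,n\}$. $\mathsf{PF}_n$ is the set of $\mathbf a=(a_1,\dots,a_n)\in[n]^n$ with $|\{j:a_j\le i\}|\ge i$ for every $i\in[n]$ (parking functions). For $\mathbf a\in[n]^n$, the center $Z(\mathbf a)$ is the largest subset $X=\{x_1<\dots<x_\ell\}\subseteq[n]$ with $a_{x_i}\le i$ for all $i\in[\ell]$, and $z(\mathbf a)=|Z(\mathbf a)|$. If $1\in\{a_1,\dots,a_n\}$, $\operatorname{run}(\mathbf a)=\max\{i\in[n]:[i]\subseteq\{a_1,\dots,a_n\}\}$; otherwise $\operatorname{run}(\mathbf a)=0$. *)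

theory Defs
  imports "HOL-Library.FuncSet"
begin

definition words :: "nat \<Rightarrow> (nat \<Rightarrow> nat) set" where
  "words n = {1..n} \<rightarrow>\<^sub>E {1..n}"

definition PF :: "nat \<Rightarrow> (nat \<Rightarrow> nat) set" where
  "PF n = {a \<in> words n. \<forall>i\<in>{1..n}. card {j\<in>{1..n}. a j \<le> i} \<ge> i}"

definition center_ok :: "nat \<Rightarrow> (nat \<Rightarrow> nat) \<Rightarrow> nat set \<Rightarrow> bool" where
  "center_ok n a X \<longleftrightarrow> X \<subseteq> {1..n} \<and>
     (\<forall>i<card X. a (sorted_list_of_set X ! i) \<le> i + 1)"

definition zc :: "nat \<Rightarrow> (nat \<Rightarrow> nat) \<Rightarrow> nat" where
  "zc n a = Max (card ` {X. center_ok n a X})"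

definition run :: "nat \<Rightarrow> (nat \<Rightarrow> nat) \<Rightarrow> nat" where
  "run n a = (if 1 \<in> a ` {1..n}
              then Max {i\<in>{1..n}. {1..i} \<subseteq> a ` {1..n}} else 0)"

end

theory Submission
  imports Defs "HOL-Library.Sublist"
begin

text \<open>Scanning a from left to right and taking a position into the center whenever its value is
  at most one more than the number of positions taken so far computes z(a). Hence both
  k \<le> z(a) and k \<le> run(a) (i.e. [k] \<subseteq> a([n])) only depend on the subword of the values
  \<le> k, while the parking condition at the levels \<ge> k only depends on the positions of the values
  > k. It therefore suffices to show that among the words in [k]^m there are as many whose greedy
  counter reaches k as there are words using every letter of [k]. Both are counts of weighted
  walks on the chain 0 \<rightarrow> 1 \<rightarrow> \<dots> \<rightarrow> k: at counter value c the greedy counter advances with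
  c + 1 letters and stays with k - c - 1, and after d distinct letters the set of seen letters
  grows with k - d letters and stays with d. The advance weights have the same product k!, the
  stay weights the same multiset, and the walk count is the product of the advance weights times
  a complete homogeneous symmetric polynomial in the stay weights.\<close>

section \<open>The center via a greedy scan\<close>

fun greedy :: "nat \<Rightarrow> nat list \<Rightarrow> nat" where
  "greedy c [] = c"
| "greedy c (x # xs) = greedy (if x \<le> Suc c then Suc c else c) xs"

lemma greedy_ge: "c \<le> greedy c xs"
  by (induction xs arbitrary: c) (auto, meson Suc_leD le_trans)

lemma greedy_le: "greedy c xs \<le> c + length xs"
proof (induction xs arbitrary: c)
  case (Cons x xs)
  have "greedy (Suc c) xs \<le> Suc c + length xs" "greedy c xs \<le> c + length xs"
    by (rule Cons.IH)+
  then show ?case by simp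
qed simp

lemma greedy_mono: "c \<le> c' \<Longrightarrow> greedy c xs \<le> greedy c' xs"
proof (induction xs arbitrary: c c')
  case (Cons x xs)
  have "(if x \<le> Suc c then Suc c else c) \<le> (if x \<le> Suc c' then Suc c' else c')"
    using Cons.prems by auto
  then show ?case using Cons.IH by simp
qed simp

lemma greedy_filter_le:
  "k \<le> greedy c xs \<longleftrightarrow> k \<le> greedy c (filter (\<lambda>x. x \<le> k) xs)"
proof (induction xs arbitrary: c)
  case (Cons x xs)
  show ?case
  proof (cases "k \<le> c")
    case True
    then show ?thesis using greedy_ge[of c] le_trans by blast
  next
    case False
    then show ?thesis using Cons.IH by auto
  qed
qed simp

lemma min_greedy_le_count:
  "c \<le> i \<Longrightarrow> min (greedy c xs) i \<le> c + length (filter (\<lambda>x. x \<le> i) xs)"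
proof (induction xs arbitrary: c)
  case (Cons x xs)
  show ?case
  proof (cases "x \<le> Suc c \<and> Suc c \<le> i")
    case True
    then show ?thesis using Cons.IH[of "Suc c"] by simp
  next
    case False
    then show ?thesis using Cons.IH[of c] Cons.prems by (cases "x \<le> Suc c") auto
  qed
qed simp

definition fits :: "(nat \<Rightarrow> nat) \<Rightarrow> nat \<Rightarrow> nat list \<Rightarrow> bool" where
  "fits a c qs \<longleftrightarrow> (\<forall>i<length qs. a (qs ! i) \<le> c + i + 1)"

lemma fits_Cons: "fits a c (q # qs) \<longleftrightarrow> a q \<le> Suc c \<and> fits a (Suc c) qs"
  unfolding fits_def by (auto simp: less_Suc_eq_0_disj)

lemma greedy_attained:
  "\<exists>qs. subseq qs ps \<and> fits a c qs \<and> c + length qs = greedy c (map a ps)"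
proof (induction ps arbitrary: c)
  case Nil
  show ?case by (auto simp: fits_def)
next
  case (Cons p ps)
  show ?case
  proof (cases "a p \<le> Suc c")
    case True
    with Cons.IH[of "Suc c"] obtain qs
      where "subseq qs ps" "fits a (Suc c) qs" "Suc c + length qs = greedy (Suc c) (map a ps)"
      by blast
    with True show ?thesis by (intro exI[of _ "p # qs"]) (auto simp: fits_Cons)
  next
    case False
    with Cons.IH[of c] show ?thesis by auto
  qed
qed

lemma fits_le_greedy:
  "subseq qs ps \<Longrightarrow> fits a c qs \<Longrightarrow> c + length qs \<le> greedy c (map a ps)"
proof (induction ps arbitrary: c qs)
  case (Cons p ps)
  show ?case
  proof (cases "qs \<noteq> [] \<and> hd qs = p")
    case True
    then obtain qs' where qs: "qs = p # qs'" by (cases qs) auto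
    with Cons.prems have "subseq qs' ps" "a p \<le> Suc c" "fits a (Suc c) qs'"
      by (auto simp: fits_Cons)
    with Cons.IH[of qs' "Suc c"] qs show ?thesis by simp
  next
    case False
    with Cons.prems have "subseq qs ps"
      by (cases qs) (auto split: if_splits)
    with Cons.IH Cons.prems(2) have "c + length qs \<le> greedy c (map a ps)" by blast
    also have "\<dots> \<le> greedy c (map a (p # ps))"
      by (simp add: greedy_mono)
    finally show ?thesis .
  qed
qed simp

lemma center_ok_iff_fits:
  "center_ok n a X \<longleftrightarrow> X \<subseteq> {1..n} \<and> fits a 0 (sorted_list_of_set X)"
  unfolding center_ok_def fits_def
  by (metis add_0 finite_atLeastAtMost finite_subset length_sorted_list_of_set)

lemma zc_eq_greedy: "zc n a = greedy 0 (map a [1..<Suc n])"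
proof -
  let ?g = "greedy 0 (map a [1..<Suc n])"
  have "?g \<in> card ` {X. center_ok n a X}"
  proof -
    obtain qs where qs: "subseq qs [1..<Suc n]" "fits a 0 qs" "length qs = ?g"
      using greedy_attained[of "[1..<Suc n]" a 0] by auto
    obtain N where N: "qs = nths [1..<Suc n] N"
      using qs(1) subseq_conv_nths by blast
    have "sorted qs" "distinct qs"
      unfolding N by (simp_all only: sorted_nths sorted_upt distinct_nthsI distinct_upt)
    then have "sorted_list_of_set (set qs) = qs" "card (set qs) = length qs"
      by (metis sorted_list_of_set_sort_remdups distinct_remdups_id sorted_sort_id,
          metis distinct_card)
    moreover have "set qs \<subseteq> {1..n}"
      using set_nths_subset[of "[1..<Suc n]" N] N
      by (simp add: atLeastLessThanSuc_atLeastAtMost del: upt_Suc)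
    ultimately have "center_ok n a (set qs)"
      using qs(2) by (simp add: center_ok_iff_fits)
    with qs(3) \<open>card (set qs) = length qs\<close> show ?thesis
      by (metis image_eqI mem_Collect_eq)
  qed
  moreover have "card X \<le> ?g" if "center_ok n a X" for X
  proof -
    have X: "X \<subseteq> {1..n}" "fits a 0 (sorted_list_of_set X)"
      using that by (auto simp: center_ok_iff_fits)
    then have "finite X" by (simp add: finite_subset)
    with X(1) have "subseq (sorted_list_of_set X) [1..<Suc n]"
      by (intro sorted_subset_imp_subseq) (auto simp del: upt_Suc)
    then have "0 + length (sorted_list_of_set X) \<le> ?g"
      using X(2) by (rule fits_le_greedy)
    then show ?thesis by simp
  qed
  moreover have "finite {X. center_ok n a X}"
    by (rule finite_subset[of _ "Pow {1..n}"]) (auto simp: center_ok_def)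
  ultimately show ?thesis
    unfolding zc_def by (intro Max_eqI) auto
qed

lemma le_run_iff:
  assumes "a ` {1..n} \<subseteq> {1..n}" "1 \<le> k"
  shows "k \<le> run n a \<longleftrightarrow> {1..k} \<subseteq> a ` {1..n}"
proof -
  define T where "T = {i\<in>{1..n}. {1..i} \<subseteq> a ` {1..n}}"
  have "finite T" by (simp add: T_def)
  show ?thesis
  proof
    assume le: "k \<le> run n a"
    then have "1 \<in> a ` {1..n}"
      using assms(2) by (auto simp: run_def split: if_splits)
    then have "1 \<in> T"
      unfolding T_def by force
    then have "Max T \<in> T"
      using \<open>finite T\<close> by (intro Max_in) auto
    moreover have "k \<le> Max T"
      using le \<open>1 \<in> a ` {1..n}\<close> by (simp add: run_def T_def)
    ultimately show "{1..k} \<subseteq> a ` {1..n}"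
      unfolding T_def by auto
  next
    assume covered: "{1..k} \<subseteq> a ` {1..n}"
    then have "k \<in> a ` {1..n}" "1 \<in> a ` {1..n}"
      using assms(2) by auto
    then have "k \<in> T"
      using covered assms unfolding T_def by auto
    then have "k \<le> Max T"
      by (intro Max_ge \<open>finite T\<close>)
    then show "k \<le> run n a"
      using \<open>1 \<in> a ` {1..n}\<close> by (simp add: run_def T_def)
  qed
qed

section \<open>Counting words by walks on a chain\<close>

fun complete_hom :: "nat \<Rightarrow> nat list \<Rightarrow> nat" where
  "complete_hom 0 xs = 1"
| "complete_hom (Suc r) [] = 0"
| "complete_hom (Suc r) (x # xs) = complete_hom (Suc r) xs + x * complete_hom r (x # xs)"

lemma complete_hom_singleton: "complete_hom r [x] = x ^ r"
  by (induction r) auto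

lemma complete_hom_swap: "complete_hom r (x # y # xs) = complete_hom r (y # x # xs)"
proof (induction r rule: less_induct)
  case (less r)
  show ?case
  proof (cases r)
    case (Suc r')
    show ?thesis
    proof (cases r')
      case (Suc r'')
      have IH: "complete_hom r' (x # y # xs) = complete_hom r' (y # x # xs)"
        "complete_hom r'' (x # y # xs) = complete_hom r'' (y # x # xs)"
        by (rule less.IH, use \<open>r = Suc r'\<close> Suc in simp)+
      have "complete_hom r (x # y # xs) = complete_hom r xs + y * complete_hom r' (y # xs)
          + x * (complete_hom r' (x # xs) + y * complete_hom r'' (y # x # xs))"
        using \<open>r = Suc r'\<close> Suc IH(1) by simp
      moreover have "complete_hom r (y # x # xs) = complete_hom r xs + x * complete_hom r' (x # xs)
          + y * (complete_hom r' (y # xs) + x * complete_hom r'' (x # y # xs))"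
        using \<open>r = Suc r'\<close> Suc IH(1) by simp
      ultimately show ?thesis
        using IH(2) by (simp add: algebra_simps)
    qed (use Suc in simp)
  qed simp
qed

lemma complete_hom_Cons_cong:
  "(\<And>r. complete_hom r xs = complete_hom r ys) \<Longrightarrow> complete_hom r (x # xs) = complete_hom r (x # ys)"
  by (induction r) simp_all

lemma complete_hom_snoc: "complete_hom r (xs @ [x]) = complete_hom r (x # xs)"
proof (induction xs arbitrary: r)
  case (Cons y xs)
  have "complete_hom r (y # xs @ [x]) = complete_hom r (y # x # xs)"
    by (rule complete_hom_Cons_cong) (rule Cons.IH)
  then show ?case by (simp add: complete_hom_swap)
qed simp

lemma complete_hom_rev: "complete_hom r (rev xs) = complete_hom r xs"
proof (induction xs arbitrary: r)
  case (Cons x xs)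
  have "complete_hom r (rev xs @ [x]) = complete_hom r (x # xs)"
    unfolding complete_hom_snoc by (rule complete_hom_Cons_cong) (rule Cons.IH)
  then show ?case by simp
qed simp

text \<open>The total weight of the walks of length m from state j to the absorbing state k of a
  chain in which state i advances to i + 1 with weight adv i and stays with weight stay i.\<close>

definition chain_count :: "(nat \<Rightarrow> nat) \<Rightarrow> (nat \<Rightarrow> nat) \<Rightarrow> nat \<Rightarrow> nat \<Rightarrow> nat \<Rightarrow> nat" where
  "chain_count adv stay k j m =
     (if k - j \<le> m
      then (\<Prod>i=j..<k. adv i) * complete_hom (m - (k - j)) (map stay [j..<Suc k])
      else 0)"

lemma chain_count_absorbing: "chain_count adv stay k k m = stay k ^ m"
  by (simp add: chain_count_def complete_hom_singleton)

lemma chain_count_0: "j < k \<Longrightarrow> chain_count adv stay k j 0 = 0"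
  by (simp add: chain_count_def)

lemma chain_count_Suc:
  assumes "j < k"
  shows "chain_count adv stay k j (Suc m)
    = adv j * chain_count adv stay k (Suc j) m + stay j * chain_count adv stay k j m"
proof -
  obtain e where e: "k - j = Suc e" "k - Suc j = e"
    using assms by (metis Suc_diff_Suc)
  define A where "A = (\<Prod>i=Suc j..<k. adv i)"
  define L where "L = map stay [Suc j..<Suc k]"
  have unfold: "chain_count adv stay k j m'
      = (if Suc e \<le> m' then adv j * A * complete_hom (m' - Suc e) (stay j # L) else 0)"
    "chain_count adv stay k (Suc j) m' = (if e \<le> m' then A * complete_hom (m' - e) L else 0)"
    for m'
    using assms e
    by (simp_all add: chain_count_def A_def L_def prod.atLeast_Suc_lessThan upt_conv_Cons
        del: upt_Suc)
  show ?thesis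
  proof (cases "Suc e \<le> m")
    case True
    then obtain r where "m - e = Suc r" "m - Suc e = r"
      by (metis Suc_diff_Suc Suc_le_lessD)
    with True show ?thesis
      unfolding unfold by (simp add: algebra_simps)
  next
    case False
    then show ?thesis
      unfolding unfold by (cases "e = m") simp_all
  qed
qed

lemma card_lists_Cons:
  assumes "finite A"
  shows "card {w. set w \<subseteq> A \<and> length w = Suc m \<and> P w}
       = (\<Sum>x\<in>A. card {w. set w \<subseteq> A \<and> length w = m \<and> P (x # w)})"
proof -
  let ?W = "\<lambda>x. {w. set w \<subseteq> A \<and> length w = m \<and> P (x # w)}"
  have "{w. set w \<subseteq> A \<and> length w = Suc m \<and> P w} = (\<lambda>(x, w). x # w) ` (SIGMA x:A. ?W x)"
    by (auto simp: length_Suc_conv image_iff)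
  moreover have "inj_on (\<lambda>(x, w). x # w) (SIGMA x:A. ?W x)"
    by (auto simp: inj_on_def)
  moreover have "finite (?W x)" for x
    by (rule finite_subset[OF _ finite_lists_length_eq[OF assms, of m]]) auto
  ultimately show ?thesis
    using assms by (simp add: card_image card_SigmaI)
qed

lemma card_lists_greedy_reaches:
  assumes "c \<le> k"
  shows "card {w. set w \<subseteq> {1..k} \<and> length w = m \<and> k \<le> greedy c w}
       = chain_count Suc (\<lambda>i. if i = k then k else k - Suc i) k c m"
  using assms
proof (induction m arbitrary: c)
  case 0
  have "{w. set w \<subseteq> {1..k} \<and> length w = 0 \<and> k \<le> greedy c w} = (if k \<le> c then {[]} else {})"
    by auto
  with 0 show ?case
    by (simp add: chain_count_absorbing chain_count_0)
next
  case (Suc m)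
  show ?case
  proof (cases "c = k")
    case True
    then have "{w. set w \<subseteq> {1..k} \<and> length w = Suc m \<and> k \<le> greedy c w}
        = {w. set w \<subseteq> {1..k} \<and> length w = Suc m}"
      using greedy_ge[of c] by auto
    with True show ?thesis
      by (simp add: card_lists_length_eq chain_count_absorbing)
  next
    case False
    define G where "G c' = card {w. set w \<subseteq> {1..k} \<and> length w = m \<and> k \<le> greedy c' w}" for c'
    have split: "{1..k} = {1..Suc c} \<union> {Suc (Suc c)..k}"
      using Suc.prems False by auto
    have "card {w. set w \<subseteq> {1..k} \<and> length w = Suc m \<and> k \<le> greedy c w}
        = (\<Sum>x\<in>{1..k}. G (if x \<le> Suc c then Suc c else c))"
      unfolding G_def by (subst card_lists_Cons) simp_all
    also have "\<dots> = Suc c * G (Suc c) + (k - Suc c) * G c"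
      unfolding split by (subst sum.union_disjoint) auto
    finally show ?thesis
      using Suc.IH[of "Suc c"] Suc.IH[of c] Suc.prems False
      by (simp add: G_def chain_count_Suc)
  qed
qed

lemma card_lists_covering:
  assumes "S \<subseteq> {1..k}"
  shows "card {w. set w \<subseteq> {1..k} \<and> length w = m \<and> {1..k} \<subseteq> S \<union> set w}
       = chain_count (\<lambda>i. k - i) (\<lambda>i. i) k (card S) m"
  using assms
proof (induction m arbitrary: S)
  case 0
  have "card S \<le> k"
    using card_mono[OF _ 0] by simp
  moreover have "{1..k} \<subseteq> S \<longleftrightarrow> card S = k"
    using 0 card_subset_eq[of "{1..k}" S] by auto
  moreover have "{w. set w \<subseteq> {1..k} \<and> length w = 0 \<and> {1..k} \<subseteq> S \<union> set w}
      = (if {1..k} \<subseteq> S then {[]} else {})"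
    by auto
  ultimately show ?case
    by (auto simp: chain_count_absorbing chain_count_0)
next
  case (Suc m)
  have fin: "finite S" and d: "card S \<le> k"
    using Suc.prems finite_subset card_mono[OF _ Suc.prems] by auto
  show ?case
  proof (cases "card S = k")
    case True
    then have "S = {1..k}"
      using Suc.prems card_subset_eq[of "{1..k}" S] by simp
    with True show ?thesis
      by (simp add: card_lists_length_eq chain_count_absorbing)
  next
    case False
    define F where "F d = chain_count (\<lambda>i. k - i) (\<lambda>i. i) k d m" for d
    have "card {w. set w \<subseteq> {1..k} \<and> length w = Suc m \<and> {1..k} \<subseteq> S \<union> set w}
        = (\<Sum>x\<in>{1..k}. F (card (insert x S)))"
      unfolding F_def
    proof (subst card_lists_Cons, simp, rule sum.cong)
      fix x assume "x \<in> {1..k}"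
      with Suc.prems have "insert x S \<subseteq> {1..k}" by auto
      from Suc.IH[OF this] show
        "card {w. set w \<subseteq> {1..k} \<and> length w = m \<and> {1..k} \<subseteq> S \<union> set (x # w)}
         = chain_count (\<lambda>i. k - i) (\<lambda>i. i) k (card (insert x S)) m"
        by simp
    qed simp
    also have "\<dots> = (\<Sum>x\<in>S. F (card S)) + (\<Sum>x\<in>{1..k} - S. F (Suc (card S)))"
      using Suc.prems fin
      by (subst sum.subset_diff[of S]) (auto simp: insert_absorb intro!: sum.cong)
    also have "\<dots> = card S * F (card S) + (k - card S) * F (Suc (card S))"
      using Suc.prems fin by (simp add: card_Diff_subset)
    finally show ?thesis
      using False d by (simp add: F_def chain_count_Suc)
  qed
qed

lemma card_lists_greedy_reaches_eq_covering:
  "card {w. set w \<subseteq> {1..k} \<and> length w = m \<and> k \<le> greedy 0 w}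
   = card {w. set w \<subseteq> {1..k} \<and> length w = m \<and> {1..k} \<subseteq> set w}"
proof -
  have "map (\<lambda>i. if i = k then k else k - Suc i) [0..<Suc k] = rev [0..<k] @ [k]"
    by (auto intro!: nth_equalityI simp: rev_nth nth_append)
  moreover have "map (\<lambda>i. i) [0..<Suc k] = [0..<k] @ [k]"
    by simp
  moreover have "complete_hom r (rev [0..<k] @ [k]) = complete_hom r ([0..<k] @ [k])" for r
    unfolding complete_hom_snoc by (rule complete_hom_Cons_cong) (rule complete_hom_rev)
  moreover have "(\<Prod>i=0..<k. Suc i) = (\<Prod>i=0..<k. k - i)"
    using fact_prod_Suc[of k] fact_prod_rev[of k] by (metis of_nat_id)
  ultimately show ?thesis
    using card_lists_greedy_reaches[of 0 k m] card_lists_covering[of "{}" k m]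
    by (simp add: chain_count_def)
qed

section \<open>Splitting parking functions at a threshold\<close>

definition parking_lists :: "nat \<Rightarrow> nat list set" where
  "parking_lists n = {xs. set xs \<subseteq> {1..n} \<and> length xs = n \<and>
     (\<forall>i\<in>{1..n}. i \<le> length (filter (\<lambda>x. x \<le> i) xs))}"

lemma card_filter_eq_length_filter_map:
  "card {j\<in>{1..n}. P (a j)} = length (filter P (map a [1..<Suc n]))"
proof -
  have "length (filter P (map a [1..<Suc n])) = length (filter (P \<circ> a) [1..<Suc n])"
    by (simp only: filter_map length_map)
  also have "\<dots> = card (set (filter (P \<circ> a) [1..<Suc n]))"
    by (rule distinct_card[symmetric]) simp
  also have "set (filter (P \<circ> a) [1..<Suc n]) = {j\<in>{1..n}. P (a j)}"
    by (auto simp del: upt_Suc)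
  finally show ?thesis by (rule sym)
qed

lemma set_map_upt: "set (map a [1..<Suc n]) = a ` {1..n}"
  by (auto simp del: upt_Suc)

lemma map_upt_in_parking_lists_iff:
  assumes "a \<in> words n"
  shows "map a [1..<Suc n] \<in> parking_lists n \<longleftrightarrow> a \<in> PF n"
proof -
  have "set (map a [1..<Suc n]) \<subseteq> {1..n}"
    using assms unfolding set_map_upt words_def by (blast dest: PiE_mem)
  moreover have "card {j\<in>{1..n}. a j \<le> i} = length (filter (\<lambda>x. x \<le> i) (map a [1..<Suc n]))" for i
    by (rule card_filter_eq_length_filter_map)
  ultimately show ?thesis
    using assms by (simp add: parking_lists_def PF_def del: upt_Suc)
qed

lemma bij_betw_PF_parking_lists:
  "bij_betw (\<lambda>a. map a [1..<Suc n]) (PF n) (parking_lists n)"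
proof (rule bij_betw_imageI)
  let ?L = "\<lambda>a. map a [1..<Suc n]"
  show "inj_on ?L (PF n)"
  proof (rule inj_onI)
    fix a b assume "a \<in> PF n" "b \<in> PF n" and eq: "?L a = ?L b"
    then have "a \<in> words n" "b \<in> words n" by (auto simp: PF_def)
    then show "a = b" unfolding words_def
    proof (rule PiE_ext)
      fix i assume "i \<in> {1..n}"
      then have "i - 1 < n" "[1..<Suc n] ! (i - 1) = i" by (auto simp del: upt_Suc)
      then show "a i = b i"
        using arg_cong[OF eq, of "\<lambda>xs. xs ! (i - 1)"] by (simp del: upt_Suc)
    qed
  qed
  show "?L ` PF n = parking_lists n"
  proof
    show "?L ` PF n \<subseteq> parking_lists n"
    proof (rule image_subsetI)
      fix a assume "a \<in> PF n"
      moreover from this have "a \<in> words n" by (simp add: PF_def)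
      ultimately show "?L a \<in> parking_lists n"
        using map_upt_in_parking_lists_iff by blast
    qed
  next
    show "parking_lists n \<subseteq> ?L ` PF n"
    proof
      fix xs assume xs: "xs \<in> parking_lists n"
      define a where "a j = (if j \<in> {1..n} then xs ! (j - 1) else undefined)" for j
      have "?L a = xs"
        using xs by (intro nth_equalityI) (auto simp: a_def parking_lists_def simp del: upt_Suc)
      moreover have "a j \<in> {1..n}" if "j \<in> {1..n}" for j
      proof -
        have "xs ! (j - 1) \<in> set xs"
          using xs that by (intro nth_mem) (auto simp: parking_lists_def)
        then show ?thesis
          using xs that by (auto simp: a_def parking_lists_def)
      qed
      then have "a \<in> words n"
        unfolding words_def by (auto simp: a_def PiE_iff extensional_def)
      ultimately show "xs \<in> ?L ` PF n"
        using xs map_upt_in_parking_lists_iff by (metis image_eqI)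
    qed
  qed
qed

lemma finite_PF: "finite (PF n)"
proof (rule finite_subset)
  show "PF n \<subseteq> words n" by (auto simp: PF_def)
  show "finite (words n)" unfolding words_def by (rule finite_PiE) auto
qed

lemma card_PF_eq_card_parking_lists:
  "card {a\<in>PF n. Q (map a [1..<Suc n])} = card {xs\<in>parking_lists n. Q xs}"
proof -
  let ?L = "\<lambda>a. map a [1..<Suc n]"
  have inj: "inj_on ?L (PF n)" and img: "?L ` PF n = parking_lists n"
    using bij_betw_PF_parking_lists unfolding bij_betw_def by blast+
  have "card {a\<in>PF n. Q (?L a)} = card (?L ` {a\<in>PF n. Q (?L a)})"
    by (rule card_image[symmetric], rule inj_on_subset[OF inj]) blast
  also have "?L ` {a\<in>PF n. Q (?L a)} = {xs\<in>?L ` PF n. Q xs}"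
    by blast
  finally show ?thesis
    unfolding img .
qed

text \<open>Letters are positive, so 0 can mark the positions of the letters \<open>\<le> k\<close>.\<close>

definition mask_small :: "nat \<Rightarrow> nat list \<Rightarrow> nat list" where
  "mask_small k xs = map (\<lambda>x. if x \<le> k then 0 else x) xs"

fun fill_zeros :: "nat list \<Rightarrow> nat list \<Rightarrow> nat list" where
  "fill_zeros [] ws = []"
| "fill_zeros (m # ms) ws = (if m = 0 then hd ws # fill_zeros ms (tl ws) else m # fill_zeros ms ws)"

definition parking_masks :: "nat \<Rightarrow> nat \<Rightarrow> nat list set" where
  "parking_masks n k = {ms. set ms \<subseteq> {0..n} \<and> (\<forall>x\<in>set ms. x \<noteq> 0 \<longrightarrow> k < x) \<and>
     length ms = n \<and> (\<forall>i\<in>{k..n}. i \<le> length (filter (\<lambda>x. x \<le> i) ms))}"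

lemma length_filter_mask_small:
  "k \<le> i \<Longrightarrow> length (filter (\<lambda>x. x \<le> i) (mask_small k xs)) = length (filter (\<lambda>x. x \<le> i) xs)"
  by (induction xs) (auto simp: mask_small_def)

lemma count_list_mask_small: "count_list (mask_small k xs) 0 = length (filter (\<lambda>x. x \<le> k) xs)"
  by (induction xs) (auto simp: mask_small_def)

lemma mask_small_filter_inj:
  "mask_small k xs = mask_small k ys \<Longrightarrow> filter (\<lambda>x. x \<le> k) xs = filter (\<lambda>x. x \<le> k) ys
   \<Longrightarrow> xs = ys"
proof (induction xs arbitrary: ys)
  case Nil
  then show ?case by (auto simp: mask_small_def)
next
  case (Cons x xs)
  then show ?case by (cases ys) (auto simp: mask_small_def split: if_splits)
qed

lemma split_fill_zeros:
  assumes "count_list ms 0 = length ws" "\<forall>x\<in>set ws. 0 < x \<and> x \<le> k"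
    and "\<forall>x\<in>set ms. x \<noteq> 0 \<longrightarrow> k < x"
  shows "mask_small k (fill_zeros ms ws) = ms \<and> filter (\<lambda>x. x \<le> k) (fill_zeros ms ws) = ws \<and>
    length (fill_zeros ms ws) = length ms \<and> set (fill_zeros ms ws) \<subseteq> (set ms - {0}) \<union> set ws"
  using assms
proof (induction ms arbitrary: ws)
  case Nil
  then show ?case by (simp add: mask_small_def)
next
  case (Cons m ms)
  show ?case
  proof (cases "m = 0")
    case True
    then obtain w ws' where ws: "ws = w # ws'"
      using Cons.prems(1) by (cases ws) auto
    with Cons.prems True have "0 < w \<and> w \<le> k" "count_list ms 0 = length ws'" by auto
    with Cons.IH[of ws'] Cons.prems True ws show ?thesis
      by (auto simp: mask_small_def)
  next
    case False
    with Cons.prems have "k < m" "count_list ms 0 = length ws" by auto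
    with Cons.IH[of ws] Cons.prems False show ?thesis
      by (auto simp: mask_small_def)
  qed
qed

lemma mask_small_in_parking_masks:
  assumes "xs \<in> parking_lists n"
  shows "mask_small k xs \<in> parking_masks n k"
proof -
  have "i \<le> length (filter (\<lambda>x. x \<le> i) (mask_small k xs))" if "i \<in> {k..n}" for i
  proof (cases "i = 0")
    case False
    with assms that show ?thesis
      by (auto simp: parking_lists_def length_filter_mask_small)
  qed simp
  then show ?thesis
    using assms by (auto simp: parking_masks_def parking_lists_def mask_small_def)
qed

lemma fill_zeros_in_parking_lists:
  assumes ms: "ms \<in> parking_masks n k" and w: "set w \<subseteq> {1..k}" "length w = count_list ms 0"
    and small: "\<forall>i<k. i \<le> length (filter (\<lambda>x. x \<le> i) w)" and "k \<le> length w"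
  shows "fill_zeros ms w \<in> parking_lists n"
proof -
  let ?xs = "fill_zeros ms w"
  have ms': "set ms \<subseteq> {0..n}" "\<forall>x\<in>set ms. x \<noteq> 0 \<longrightarrow> k < x" "length ms = n"
    "\<forall>i\<in>{k..n}. i \<le> length (filter (\<lambda>x. x \<le> i) ms)"
    using ms by (auto simp: parking_masks_def)
  have "\<forall>x\<in>set w. 0 < x \<and> x \<le> k"
    using w(1) by auto
  then have xs: "mask_small k ?xs = ms" "filter (\<lambda>x. x \<le> k) ?xs = w" "length ?xs = n"
    "set ?xs \<subseteq> (set ms - {0}) \<union> set w"
    using split_fill_zeros[OF w(2)[symmetric] _ ms'(2)] ms'(3) by auto
  have "k \<le> n"
    using \<open>k \<le> length w\<close> w(2) ms'(3) count_le_length[of ms 0] by linarith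
  then have "set ?xs \<subseteq> {1..n}"
    using xs(4) ms'(1) w(1) by fastforce
  moreover have "i \<le> length (filter (\<lambda>x. x \<le> i) ?xs)" if "i \<in> {1..n}" for i
  proof (cases "k \<le> i")
    case True
    with ms'(4) that have "i \<le> length (filter (\<lambda>x. x \<le> i) ms)"
      by auto
    then show ?thesis
      using length_filter_mask_small[OF True, of ?xs] xs(1) by simp
  next
    case False
    have "filter (\<lambda>x. x \<le> i) w = filter (\<lambda>x. x \<le> i) (filter (\<lambda>x. x \<le> k) ?xs)"
      by (simp only: xs(2))
    also have "\<dots> = filter (\<lambda>x. x \<le> i) ?xs"
      using False by (auto simp: filter_filter intro: filter_cong)
    finally have "filter (\<lambda>x. x \<le> i) ?xs = filter (\<lambda>x. x \<le> i) w" ..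
    with small False show ?thesis by simp
  qed
  ultimately show ?thesis
    using xs(3) by (simp add: parking_lists_def)
qed

text \<open>The parking condition at a level i \<ge> k only sees the mask, at a level i < k only the
  subword of small letters, where it is already implied by P.\<close>

lemma card_parking_lists_by_small_letters:
  assumes "\<And>w i. P w \<Longrightarrow> set w \<subseteq> {1..k} \<Longrightarrow> i < k \<Longrightarrow> i \<le> length (filter (\<lambda>x. x \<le> i) w)"
    and "\<And>w. P w \<Longrightarrow> set w \<subseteq> {1..k} \<Longrightarrow> k \<le> length w"
  shows "card {xs\<in>parking_lists n. P (filter (\<lambda>x. x \<le> k) xs)}
    = (\<Sum>ms\<in>parking_masks n k. card {w. set w \<subseteq> {1..k} \<and> length w = count_list ms 0 \<and> P w})"
proof -
  let ?split = "\<lambda>xs. (mask_small k xs, filter (\<lambda>x. x \<le> k) xs)"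
  let ?W = "\<lambda>ms. {w. set w \<subseteq> {1..k} \<and> length w = count_list ms 0 \<and> P w}"
  have bij: "bij_betw ?split {xs\<in>parking_lists n. P (filter (\<lambda>x. x \<le> k) xs)} (SIGMA ms:parking_masks n k. ?W ms)"
  proof (rule bij_betw_imageI)
    show "inj_on ?split {xs\<in>parking_lists n. P (filter (\<lambda>x. x \<le> k) xs)}"
      by (rule inj_onI) (auto intro: mask_small_filter_inj)
    show "?split ` {xs\<in>parking_lists n. P (filter (\<lambda>x. x \<le> k) xs)} = (SIGMA ms:parking_masks n k. ?W ms)"
    proof
      show "?split ` {xs\<in>parking_lists n. P (filter (\<lambda>x. x \<le> k) xs)} \<subseteq> (SIGMA ms:parking_masks n k. ?W ms)"
        by (auto simp: mask_small_in_parking_masks count_list_mask_small parking_lists_def)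
    next
      show "(SIGMA ms:parking_masks n k. ?W ms) \<subseteq> ?split ` {xs\<in>parking_lists n. P (filter (\<lambda>x. x \<le> k) xs)}"
      proof
        fix p assume "p \<in> (SIGMA ms:parking_masks n k. ?W ms)"
        then obtain ms w where p: "p = (ms, w)" and ms: "ms \<in> parking_masks n k" and w: "w \<in> ?W ms"
          by blast
        have "\<forall>x\<in>set w. 0 < x \<and> x \<le> k"
          using w by auto
        with ms w have "mask_small k (fill_zeros ms w) = ms" "filter (\<lambda>x. x \<le> k) (fill_zeros ms w) = w"
          using split_fill_zeros[of ms w k] by (auto simp: parking_masks_def)
        moreover have "fill_zeros ms w \<in> parking_lists n"
          using ms w assms(1) assms(2)[of w] by (intro fill_zeros_in_parking_lists) auto
        ultimately show "p \<in> ?split ` {xs\<in>parking_lists n. P (filter (\<lambda>x. x \<le> k) xs)}"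
          using w p by (intro image_eqI[of _ _ "fill_zeros ms w"]) auto
      qed
    qed
  qed
  have "finite (parking_masks n k)"
    by (rule finite_subset[OF _ finite_lists_length_eq[of "{0..n}" n]]) (auto simp: parking_masks_def)
  moreover have "finite (?W ms)" for ms
    by (rule finite_subset[OF _ finite_lists_length_eq[of "{1..k}" "count_list ms 0"]]) auto
  ultimately have "card (SIGMA ms:parking_masks n k. ?W ms) = (\<Sum>ms\<in>parking_masks n k. card (?W ms))"
    by (intro card_SigmaI) auto
  with bij show ?thesis
    by (simp add: bij_betw_same_card)
qed

lemma card_parking_lists_greedy_reaches_eq_covering:
  "card {xs\<in>parking_lists n. k \<le> greedy 0 xs} = card {xs\<in>parking_lists n. {1..k} \<subseteq> set xs}"
proof -
  have "{xs\<in>parking_lists n. k \<le> greedy 0 xs}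
      = {xs\<in>parking_lists n. k \<le> greedy 0 (filter (\<lambda>x. x \<le> k) xs)}"
    using greedy_filter_le by blast
  also have "card \<dots> = (\<Sum>ms\<in>parking_masks n k.
      card {w. set w \<subseteq> {1..k} \<and> length w = count_list ms 0 \<and> k \<le> greedy 0 w})"
  proof (rule card_parking_lists_by_small_letters)
    fix w i assume "k \<le> greedy 0 w" "i < k"
    then show "i \<le> length (filter (\<lambda>x. x \<le> i) w)"
      using min_greedy_le_count[of 0 i w] by simp
  next
    fix w assume "k \<le> greedy 0 w"
    then show "k \<le> length w"
      using greedy_le[of 0 w] by simp
  qed
  also have "\<dots> = (\<Sum>ms\<in>parking_masks n k.
      card {w. set w \<subseteq> {1..k} \<and> length w = count_list ms 0 \<and> {1..k} \<subseteq> set w})"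
    by (simp only: card_lists_greedy_reaches_eq_covering)
  also have "\<dots> = card {xs\<in>parking_lists n. {1..k} \<subseteq> set (filter (\<lambda>x. x \<le> k) xs)}"
  proof (rule card_parking_lists_by_small_letters[symmetric])
    fix w i assume "{1..k} \<subseteq> set w" "i < k"
    then have "card {1..i} \<le> card (set (filter (\<lambda>x. x \<le> i) w))"
      by (intro card_mono) auto
    then show "i \<le> length (filter (\<lambda>x. x \<le> i) w)"
      using card_length[of "filter (\<lambda>x. x \<le> i) w"] by simp
  next
    fix w assume "{1..k} \<subseteq> set w"
    then have "card {1..k} \<le> card (set w)"
      by (intro card_mono) simp_all
    then show "k \<le> length w"
      using card_length[of w] by simp
  qed
  also have "{xs\<in>parking_lists n. {1..k} \<subseteq> set (filter (\<lambda>x. x \<le> k) xs)}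
      = {xs\<in>parking_lists n. {1..k} \<subseteq> set xs}"
    by auto
  finally show ?thesis .
qed

section \<open>Equal threshold counts give equal distributions\<close>

lemma card_eq_if_card_ge_eq:
  fixes f g :: "'a \<Rightarrow> nat"
  assumes "finite A" "\<And>k. card {a\<in>A. k \<le> f a} = card {a\<in>A. k \<le> g a}"
  shows "card {a\<in>A. f a = k} = card {a\<in>A. g a = k}"
proof -
  have "card {a\<in>A. h a = k} = card {a\<in>A. k \<le> h a} - card {a\<in>A. Suc k \<le> h a}"
    for h :: "'a \<Rightarrow> nat"
  proof -
    have "{a\<in>A. h a = k} = {a\<in>A. k \<le> h a} - {a\<in>A. Suc k \<le> h a}"
      by auto
    moreover have "card ({a\<in>A. k \<le> h a} - {a\<in>A. Suc k \<le> h a})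
        = card {a\<in>A. k \<le> h a} - card {a\<in>A. Suc k \<le> h a}"
      using assms(1) by (intro card_Diff_subset) auto
    ultimately show ?thesis by simp
  qed
  then show ?thesis
    using assms(2) by presburger
qed

lemma sum_comp_eq_if_card_ge_eq:
  fixes f g :: "'a \<Rightarrow> nat" and h :: "nat \<Rightarrow> 'b::comm_semiring_1"
  assumes "finite A" "\<And>k. card {a\<in>A. k \<le> f a} = card {a\<in>A. k \<le> g a}"
  shows "(\<Sum>a\<in>A. h (f a)) = (\<Sum>a\<in>A. h (g a))"
proof -
  define T where "T = f ` A \<union> g ` A"
  have sum_by_fibres: "(\<Sum>a\<in>A. h (u a)) = (\<Sum>y\<in>T. of_nat (card {a\<in>A. u a = y}) * h y)"
    if "u ` A \<subseteq> T" for u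
  proof -
    have "(\<Sum>a\<in>A. h (u a)) = (\<Sum>y\<in>T. \<Sum>a\<in>{a\<in>A. u a = y}. h (u a))"
      using assms(1) that by (intro sum.group[symmetric]) (auto simp: T_def)
    also have "\<dots> = (\<Sum>y\<in>T. of_nat (card {a\<in>A. u a = y}) * h y)"
      by (intro sum.cong) auto
    finally show ?thesis .
  qed
  have "(\<Sum>a\<in>A. h (f a)) = (\<Sum>y\<in>T. of_nat (card {a\<in>A. f a = y}) * h y)"
    by (rule sum_by_fibres) (simp add: T_def)
  also have "\<dots> = (\<Sum>y\<in>T. of_nat (card {a\<in>A. g a = y}) * h y)"
    using card_eq_if_card_ge_eq[OF assms] by simp
  also have "\<dots> = (\<Sum>a\<in>A. h (g a))"
    by (rule sum_by_fibres[symmetric]) (simp add: T_def)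
  finally show ?thesis .
qed

theorem theorem3p5:
  fixes n :: nat and t :: "'a::comm_semiring_1"
  assumes "n \<ge> 1"
  shows "(\<Sum>a\<in>PF n. t ^ zc n a) = (\<Sum>a\<in>PF n. t ^ run n a)"
proof (rule sum_comp_eq_if_card_ge_eq[OF finite_PF])
  fix k
  show "card {a\<in>PF n. k \<le> zc n a} = card {a\<in>PF n. k \<le> run n a}"
  proof (cases "k = 0")
    case False
    have "k \<le> run n a \<longleftrightarrow> {1..k} \<subseteq> set (map a [1..<Suc n])" if "a \<in> PF n" for a
    proof -
      have "a ` {1..n} \<subseteq> {1..n}"
        using that unfolding PF_def words_def by (blast dest: PiE_mem)
      with False show ?thesis
        unfolding set_map_upt by (intro le_run_iff) auto
    qed
    then have "{a\<in>PF n. k \<le> run n a} = {a\<in>PF n. {1..k} \<subseteq> set (map a [1..<Suc n])}"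
      by blast
    then show ?thesis
      using card_parking_lists_greedy_reaches_eq_covering[of n k]
        card_PF_eq_card_parking_lists[of n "\<lambda>xs. k \<le> greedy 0 xs"]
        card_PF_eq_card_parking_lists[of n "\<lambda>xs. {1..k} \<subseteq> set xs"]
      by (simp add: zc_eq_greedy)
  qed simp
qed

end
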